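(* Let $m\ge2$, $n=2m+1$, and consider $$(P):\ \sup\ x_m\ \text{ s.t. }\ x_1(E_1+E_{m+1})+\sum_{i=2}^{m-1}x_i(E_i+E_{m+i}+E_{i-1,n}+E_{m+i-1,n})+x_m(E_m-E_{2m}+E_{m-1,n}+E_{2m-1,n})\preceq I_{m+1}\oplus0_m,$$ with dual $(D)$. Then $\operatorname{val}(P)=0<\operatorname{val}(D)=1$.
   Context: $E_{ij}\in\mathcal S^n$ is the symmetric matrix whose only nonzero entries are $1$ in positions $(i,j)$ and $(j,i)$; $E_i:=E_{ii}$. For $(P)$: $\sup\{c^Tx:\sum_ix_iA_i\preceq B\}$ the dual is $(D)$: $\inf\{B\bullet Y:A_i\bullet Y=c_i\ \forall i,\ Y\succeq0\}$, $S\bullet T=\operatorname{trace}(ST)$. *)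

theory Defs
  imports Complex_Main "HOL-Library.Extended_Real"
begin

text \<open>Symmetric n x n real matrices are represented as functions nat => nat => real,
  with indices ranging over {1..n}; entries outside are irrelevant.\<close>

type_synonym rmat = "nat \<Rightarrow> nat \<Rightarrow> real"

definition Emat :: "nat \<Rightarrow> nat \<Rightarrow> rmat" where
  "Emat i j = (\<lambda>a b. if (a = i \<and> b = j) \<or> (a = j \<and> b = i) then 1 else 0)"

abbreviation Ed :: "nat \<Rightarrow> rmat" where "Ed i \<equiv> Emat i i"

definition madd :: "rmat \<Rightarrow> rmat \<Rightarrow> rmat" (infixl "\<oplus>\<^sub>M" 65) where
  "madd S T = (\<lambda>a b. S a b + T a b)"

definition msub :: "rmat \<Rightarrow> rmat \<Rightarrow> rmat" (infixl "\<ominus>\<^sub>M" 65) where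
  "msub S T = (\<lambda>a b. S a b - T a b)"

definition frob :: "nat \<Rightarrow> rmat \<Rightarrow> rmat \<Rightarrow> real" where
  "frob n S T = (\<Sum>a\<in>{1..n}. \<Sum>b\<in>{1..n}. S a b * T b a)"

definition symm :: "nat \<Rightarrow> rmat \<Rightarrow> bool" where
  "symm n M \<longleftrightarrow> (\<forall>a\<in>{1..n}. \<forall>b\<in>{1..n}. M a b = M b a)"

definition psd :: "nat \<Rightarrow> rmat \<Rightarrow> bool" where
  "psd n M \<longleftrightarrow> symm n M \<and>
     (\<forall>v :: nat \<Rightarrow> real. (\<Sum>a\<in>{1..n}. \<Sum>b\<in>{1..n}. v a * M a b * v b) \<ge> 0)"

definition Acon :: "nat \<Rightarrow> nat \<Rightarrow> rmat" where
  "Acon m i = (let n = 2*m+1 in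
     if i = 1 then Ed 1 \<oplus>\<^sub>M Ed (m+1)
     else if i = m then Ed m \<ominus>\<^sub>M Ed (2*m) \<oplus>\<^sub>M Emat (m-1) n \<oplus>\<^sub>M Emat (2*m-1) n
     else Ed i \<oplus>\<^sub>M Ed (m+i) \<oplus>\<^sub>M Emat (i-1) n \<oplus>\<^sub>M Emat (m+i-1) n)"

definition Bmat :: "nat \<Rightarrow> rmat" where
  "Bmat m = (\<lambda>a b. if a = b \<and> 1 \<le> a \<and> a \<le> m+1 then 1 else 0)"

definition cvec :: "nat \<Rightarrow> nat \<Rightarrow> real" where
  "cvec m i = (if i = m then 1 else 0)"

definition primal_feasible :: "nat \<Rightarrow> (nat \<Rightarrow> real) \<Rightarrow> bool" where
  "primal_feasible m x \<longleftrightarrow>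
     psd (2*m+1) (\<lambda>a b. Bmat m a b - (\<Sum>i\<in>{1..m}. x i * Acon m i a b))"

definition dual_feasible :: "nat \<Rightarrow> rmat \<Rightarrow> bool" where
  "dual_feasible m Y \<longleftrightarrow>
     (\<forall>i\<in>{1..m}. frob (2*m+1) (Acon m i) Y = cvec m i) \<and> psd (2*m+1) Y"

text \<open>Optimal values in the extended reals (sup over empty = -\<infinity>, inf over empty = +\<infinity>).\<close>
definition valP :: "nat \<Rightarrow> ereal" where
  "valP m = (SUP x \<in> {x. primal_feasible m x}. ereal (\<Sum>i\<in>{1..m}. cvec m i * x i))"

definition valD :: "nat \<Rightarrow> ereal" where
  "valD m = (INF Y \<in> {Y. dual_feasible m Y}. ereal (frob (2*m+1) (Bmat m) Y))"

end

theory Submission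
  imports Defs
begin

text \<open>Both values are forced by the fact that a zero diagonal entry of a positive semidefinite
  matrix kills its row and column.  For primal feasible \<open>x\<close> the slack \<open>B - \<Sum>\<^sub>i x\<^sub>i A\<^sub>i\<close> vanishes
  at \<open>(n, n)\<close>, since \<open>B\<close> is zero there and no \<open>A\<^sub>i\<close> touches that entry; its entry \<open>(m - 1, n)\<close>
  is \<open>-x\<^sub>m\<close>, hence \<open>x\<^sub>m = 0\<close> and \<open>val(P) = 0\<close>.  For dual feasible \<open>Y\<close> the constraints
  \<open>A\<^sub>i \<bullet> Y = 0\<close> for \<open>i < m\<close> give \<open>Y(i, i) = Y(m + i, m + i) = 0\<close> by induction on \<open>i\<close>: the
  off-diagonal entries of \<open>A\<^sub>i\<close> sit in rows \<open>i - 1\<close> and \<open>m + i - 1\<close> of the last column, which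
  vanish by the previous step.  The constraint for \<open>A\<^sub>m\<close> then reads \<open>Y(m, m) - Y(2m, 2m) = 1\<close>,
  so \<open>B \<bullet> Y \<ge> Y(m, m) \<ge> 1\<close>, with equality for \<open>Y = E\<^sub>m\<close>.\<close>

lemma quad_form_restrict_support:
  fixes M :: rmat
  assumes "finite A" "S \<subseteq> A" "\<And>c. c \<in> A - S \<Longrightarrow> v c = 0"
  shows "(\<Sum>c\<in>A. \<Sum>d\<in>A. v c * M c d * v d) = (\<Sum>c\<in>S. \<Sum>d\<in>S. v c * M c d * v d)"
proof -
  have "(\<Sum>c\<in>A. \<Sum>d\<in>A. v c * M c d * v d) = (\<Sum>c\<in>A. \<Sum>d\<in>S. v c * M c d * v d)"
  proof (rule sum.cong)
    fix c assume "c \<in> A"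
    show "(\<Sum>d\<in>A. v c * M c d * v d) = (\<Sum>d\<in>S. v c * M c d * v d)"
      using assms by (intro sum.mono_neutral_right) auto
  qed simp
  also have "\<dots> = (\<Sum>c\<in>S. \<Sum>d\<in>S. v c * M c d * v d)"
    using assms by (intro sum.mono_neutral_right) auto
  finally show ?thesis .
qed

lemma psd_quad_form_nonneg:
  "psd n M \<Longrightarrow> (\<Sum>a\<in>{1..n}. \<Sum>b\<in>{1..n}. v a * M a b * v b) \<ge> 0"
  unfolding psd_def by blast

lemma psd_diag_nonneg:
  assumes "psd n M" "a \<in> {1..n}"
  shows "M a a \<ge> 0"
proof -
  let ?v = "\<lambda>c. if c = a then 1 else 0 :: real"
  have "0 \<le> (\<Sum>c\<in>{1..n}. \<Sum>d\<in>{1..n}. ?v c * M c d * ?v d)"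
    using assms(1) by (rule psd_quad_form_nonneg)
  also have "\<dots> = M a a"
    using assms(2) by (subst quad_form_restrict_support[where S = "{a}"]) auto
  finally show ?thesis .
qed

lemma psd_entry_eq_0_if_diag_eq_0:
  assumes "psd n M" "a \<in> {1..n}" "b \<in> {1..n}" "M a a = 0"
  shows "M a b = 0 \<and> M b a = 0"
proof -
  have sym: "M b a = M a b" using assms(1-3) unfolding psd_def symm_def by auto
  have "M a b = 0"
  proof (rule ccontr)
    assume nz: "M a b \<noteq> 0"
    then have "a \<noteq> b" using assms(4) by auto
    \<comment> \<open>as \<open>M a a = 0\<close>, the form at \<open>t e\<^sub>a + e\<^sub>b\<close> is affine in \<open>t\<close> with slope \<open>2 M a b \<noteq> 0\<close>\<close>
    define t where "t = - (M b b + 1) / (2 * M a b)"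
    let ?v = "\<lambda>c. if c = a then t else if c = b then 1 else 0"
    have "0 \<le> (\<Sum>c\<in>{1..n}. \<Sum>d\<in>{1..n}. ?v c * M c d * ?v d)"
      using assms(1) by (rule psd_quad_form_nonneg)
    also have "\<dots> = t * M a a * t + t * M a b + M b a * t + M b b"
      using assms(2,3) \<open>a \<noteq> b\<close> by (subst quad_form_restrict_support[where S = "{a, b}"]) auto
    also have "\<dots> = -1"
      using assms(4) sym nz by (simp add: t_def field_simps)
    finally show False by simp
  qed
  with sym show ?thesis by simp
qed

lemma psd_diagonal:
  assumes "\<And>a b. a \<noteq> b \<Longrightarrow> M a b = 0" "\<And>a. M a a \<ge> 0"
  shows "psd n M"
  unfolding psd_def symm_def
proof (intro conjI allI ballI)
  fix a b show "M a b = M b a" using assms(1) by (cases "a = b") auto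
next
  fix v :: "nat \<Rightarrow> real"
  have "(\<Sum>a\<in>{1..n}. \<Sum>b\<in>{1..n}. v a * M a b * v b) = (\<Sum>a\<in>{1..n}. M a a * (v a)\<^sup>2)"
    using assms(1) by (intro sum.cong refl) (simp add: sum.remove power2_eq_square)
  also have "\<dots> \<ge> 0" using assms(2) by (intro sum_nonneg) simp
  finally show "(\<Sum>a\<in>{1..n}. \<Sum>b\<in>{1..n}. v a * M a b * v b) \<ge> 0" .
qed

lemma frob_diagonal:
  assumes "\<And>a b. a \<noteq> b \<Longrightarrow> D a b = 0"
  shows "frob n D Y = (\<Sum>a\<in>{1..n}. D a a * Y a a)"
  unfolding frob_def using assms by (intro sum.cong refl) (simp add: sum.remove)

lemma frob_madd [simp]: "frob n (S \<oplus>\<^sub>M T) Y = frob n S Y + frob n T Y"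
  by (simp add: frob_def madd_def distrib_right sum.distrib)

lemma frob_msub [simp]: "frob n (S \<ominus>\<^sub>M T) Y = frob n S Y - frob n T Y"
  by (simp add: frob_def msub_def left_diff_distrib sum_subtractf)

lemma frob_Emat:
  assumes "i \<in> {1..n}" "j \<in> {1..n}"
  shows "frob n (Emat i j) Y = (if i = j then Y i i else Y i j + Y j i)"
proof -
  have "frob n (Emat i j) Y
      = (\<Sum>a\<in>{1..n}. (if a = i then Y j a else 0) + (if a = j \<and> i \<noteq> j then Y i a else 0))"
    unfolding frob_def
  proof (rule sum.cong)
    fix a
    have "(\<Sum>b\<in>{1..n}. Emat i j a b * Y b a)
        = (\<Sum>b\<in>{1..n}. (if b = j then (if a = i then Y j a else 0) else 0)
                        + (if b = i then (if a = j \<and> i \<noteq> j then Y i a else 0) else 0))"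
      by (rule sum.cong) (auto simp: Emat_def)
    then show "(\<Sum>b\<in>{1..n}. Emat i j a b * Y b a)
        = (if a = i then Y j a else 0) + (if a = j \<and> i \<noteq> j then Y i a else 0)"
      using assms by (simp add: sum.distrib)
  qed simp
  also have "\<dots> = (if i = j then Y i i else Y i j + Y j i)"
    using assms by (simp add: sum.distrib)
  finally show ?thesis .
qed

lemma frob_Acon_1:
  assumes "m \<ge> 2"
  shows "frob (2*m+1) (Acon m 1) Y = Y 1 1 + Y (m+1) (m+1)"
  using assms by (simp add: Acon_def frob_Emat)

lemma frob_Acon:
  assumes "2 \<le> i" "i \<le> m"
  shows "frob (2*m+1) (Acon m i) Y
       = Y i i + (if i = m then -1 else 1) * Y (m+i) (m+i)
         + (Y (i-1) (2*m+1) + Y (2*m+1) (i-1)) + (Y (m+i-1) (2*m+1) + Y (2*m+1) (m+i-1))"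
proof -
  have "frob (2*m+1) (Emat (i-1) (2*m+1)) Y = Y (i-1) (2*m+1) + Y (2*m+1) (i-1)"
    "frob (2*m+1) (Emat (m+i-1) (2*m+1)) Y = Y (m+i-1) (2*m+1) + Y (2*m+1) (m+i-1)"
    using assms by (subst frob_Emat; auto)+
  with assms show ?thesis by (auto simp: Acon_def Let_def frob_Emat mult_2)
qed

lemma Acon_corner_eq_0: "i \<in> {1..m} \<Longrightarrow> Acon m i (2*m+1) (2*m+1) = 0"
  by (auto simp: Acon_def Let_def Emat_def madd_def msub_def)

lemma Acon_last_col:
  "m \<ge> 2 \<Longrightarrow> i \<in> {1..m} \<Longrightarrow> Acon m i (m-1) (2*m+1) = (if i = m then 1 else 0)"
  by (auto simp: Acon_def Let_def Emat_def madd_def msub_def)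

lemma sum_cvec_mult_eq: "m \<ge> 1 \<Longrightarrow> (\<Sum>i\<in>{1..m}. cvec m i * x i) = x m"
  by (subst sum.remove[where x = m]) (auto simp: cvec_def)

lemma primal_feasible_last_eq_0:
  assumes "m \<ge> 2" "primal_feasible m x"
  shows "x m = 0"
proof -
  define S where "S = (\<lambda>a b. Bmat m a b - (\<Sum>i\<in>{1..m}. x i * Acon m i a b))"
  have psd: "psd (2*m+1) S"
    using assms(2) unfolding primal_feasible_def S_def .
  have "S (2*m+1) (2*m+1) = 0"
    using Acon_corner_eq_0 assms(1) by (simp add: S_def Bmat_def)
  moreover have "2*m+1 \<in> {1..2*m+1}" "m-1 \<in> {1..2*m+1}"
    using assms(1) by auto
  ultimately have "S (m-1) (2*m+1) = 0"
    using psd_entry_eq_0_if_diag_eq_0[OF psd] by blast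
  moreover have "(\<Sum>i\<in>{1..m}. x i * Acon m i (m-1) (2*m+1)) = x m"
    using assms(1) Acon_last_col by (subst sum.remove[where x = m]) auto
  moreover have "Bmat m (m-1) (2*m+1) = 0"
    unfolding Bmat_def by auto
  ultimately show ?thesis
    by (simp add: S_def)
qed

lemma valP_eq_0:
  assumes "m \<ge> 2"
  shows "valP m = 0"
  unfolding valP_def
proof (rule SUP_eq_const)
  have "primal_feasible m (\<lambda>_. 0)"
    unfolding primal_feasible_def by (simp add: Bmat_def psd_diagonal)
  then show "{x. primal_feasible m x} \<noteq> {}" by blast
next
  fix x assume "x \<in> {x. primal_feasible m x}"
  then have "x m = 0" using assms primal_feasible_last_eq_0 by blast
  with sum_cvec_mult_eq[of m x] assms show "ereal (\<Sum>i\<in>{1..m}. cvec m i * x i) = 0"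
    by (simp add: zero_ereal_def)
qed

lemma dual_feasible_diag_eq_0:
  assumes feas: "dual_feasible m Y" and "1 \<le> k" "k < m"
  shows "Y k k = 0 \<and> Y (m+k) (m+k) = 0"
proof -
  have psd: "psd (2*m+1) Y"
    and constr: "\<And>i. i \<in> {1..m} \<Longrightarrow> frob (2*m+1) (Acon m i) Y = cvec m i"
    using feas unfolding dual_feasible_def by blast+
  show ?thesis
    using assms(2,3)
  proof (induction k rule: nat_induct_at_least)
    case base
    have "Y 1 1 + Y (m+1) (m+1) = 0"
      using constr[of 1] frob_Acon_1[of m Y] base by (simp add: cvec_def)
    moreover have "Y 1 1 \<ge> 0" "Y (m+1) (m+1) \<ge> 0"
      using psd_diag_nonneg[OF psd] base by auto
    ultimately show ?case by simp
  next
    case (Suc k)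
    then have diag: "Y k k = 0" "Y (m+k) (m+k) = 0" by simp_all
    have mem: "k \<in> {1..2*m+1}" "m+k \<in> {1..2*m+1}" "2*m+1 \<in> {1..2*m+1}"
      using Suc by auto
    have "Y k (2*m+1) = 0" "Y (2*m+1) k = 0" "Y (m+k) (2*m+1) = 0" "Y (2*m+1) (m+k) = 0"
      using psd_entry_eq_0_if_diag_eq_0[OF psd] diag mem by blast+
    then have "Y (Suc k) (Suc k) + Y (m + Suc k) (m + Suc k) = 0"
      using constr[of "Suc k"] frob_Acon[of "Suc k" m Y] Suc by (simp add: cvec_def)
    moreover have "Y (Suc k) (Suc k) \<ge> 0" "Y (m + Suc k) (m + Suc k) \<ge> 0"
      using psd_diag_nonneg[OF psd] Suc by auto
    ultimately show ?case by simp
  qed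
qed

lemma frob_Bmat: "frob (2*m+1) (Bmat m) Y = (\<Sum>a\<in>{1..m+1}. Y a a)"
proof -
  have "frob (2*m+1) (Bmat m) Y = (\<Sum>a\<in>{1..2*m+1}. if a \<in> {1..m+1} then Y a a else 0)"
    by (subst frob_diagonal) (auto simp: Bmat_def intro!: sum.cong)
  also have "\<dots> = (\<Sum>a\<in>{1..2*m+1} \<inter> {1..m+1}. Y a a)"
    by (rule sum.inter_restrict[symmetric]) simp
  also have "{1..2*m+1} \<inter> {1..m+1} = {1..m+1}"
    by auto
  finally show ?thesis .
qed

lemma dual_feasible_objective_ge_1:
  assumes m: "m \<ge> 2" and feas: "dual_feasible m Y"
  shows "frob (2*m+1) (Bmat m) Y \<ge> 1"
proof -
  have psd: "psd (2*m+1) Y"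
    using feas unfolding dual_feasible_def by blast
  have diag: "Y (m-1) (m-1) = 0" "Y (m + (m-1)) (m + (m-1)) = 0"
    using dual_feasible_diag_eq_0[OF feas, of "m-1"] m by auto
  have mem: "m-1 \<in> {1..2*m+1}" "m + (m-1) \<in> {1..2*m+1}" "2*m+1 \<in> {1..2*m+1}"
    using m by auto
  have "Y (m-1) (2*m+1) = 0" "Y (2*m+1) (m-1) = 0"
    "Y (m + (m-1)) (2*m+1) = 0" "Y (2*m+1) (m + (m-1)) = 0"
    using psd_entry_eq_0_if_diag_eq_0[OF psd] diag mem by blast+
  moreover have "m + m - 1 = m + (m - 1)" using m by simp
  ultimately have "Y m m - Y (m+m) (m+m) = 1"
    using feas frob_Acon[of m m Y] m by (simp add: dual_feasible_def cvec_def)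
  moreover have "Y (m+m) (m+m) \<ge> 0" "\<And>a. a \<in> {1..m+1} \<Longrightarrow> Y a a \<ge> 0"
    using psd_diag_nonneg[OF psd] m by auto
  ultimately have "1 \<le> (\<Sum>a\<in>{m}. Y a a)" by simp
  also have "\<dots> \<le> (\<Sum>a\<in>{1..m+1}. Y a a)"
    using \<open>\<And>a. a \<in> {1..m+1} \<Longrightarrow> Y a a \<ge> 0\<close> m by (intro sum_mono2) auto
  also have "\<dots> = frob (2*m+1) (Bmat m) Y"
    by (rule frob_Bmat[symmetric])
  finally show ?thesis .
qed

lemma dual_feasible_Ed:
  assumes m: "m \<ge> 2"
  shows "dual_feasible m (Ed m)"
  unfolding dual_feasible_def
proof (intro conjI ballI)
  fix i assume i: "i \<in> {1..m}"
  then consider "i = 1" | "2 \<le> i" by force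
  then show "frob (2*m+1) (Acon m i) (Ed m) = cvec m i"
  proof cases
    case 1
    then show ?thesis using frob_Acon_1[OF m] m by (simp add: Emat_def cvec_def)
  next
    case 2
    then show ?thesis using frob_Acon[of i m "Ed m"] i by (simp add: Emat_def cvec_def)
  qed
next
  show "psd (2*m+1) (Ed m)"
    by (rule psd_diagonal) (auto simp: Emat_def)
qed

lemma valD_eq_1:
  assumes m: "m \<ge> 2"
  shows "valD m = 1"
  unfolding valD_def
proof (rule antisym)
  have "frob (2*m+1) (Bmat m) (Ed m) = 1"
    using m by (subst frob_Bmat) (simp add: Emat_def)
  then show "(INF Y \<in> {Y. dual_feasible m Y}. ereal (frob (2*m+1) (Bmat m) Y)) \<le> 1"
    using dual_feasible_Ed[OF m] by (intro INF_lower2[of "Ed m"]) auto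
  show "1 \<le> (INF Y \<in> {Y. dual_feasible m Y}. ereal (frob (2*m+1) (Bmat m) Y))"
    using dual_feasible_objective_ge_1[OF m] by (intro INF_greatest) simp
qed

theorem mainTheorem8:
  fixes m :: nat
  assumes "m \<ge> 2"
  shows "valP m = 0 \<and> 0 < valD m \<and> valD m = 1"
  using valP_eq_0[OF assms] valD_eq_1[OF assms] by simp

end
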